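(* Consider Algorithm 3 (described in the context) under the Standing Assumption and Matrix Assumption of the context, and suppose $\{\beta_k\}$ is chosen such that $\beta_k\bar\xi_k\bar\tau_k/(\bar\tau_kL+\Gamma)\in(0,1]$ for all $k\in\mathbb{N}$. Then for all $k\in\mathbb{N}$, $$\phi(x_k+\bar\alpha_k\bar d_k,\bar\tau_k)-\phi(x_k,\bar\tau_k)\le-\bar\alpha_k\Delta q(x_k,\bar\tau_k,g_k,H_k,d_k)+\tfrac12\bar\alpha_k\beta_k\Delta q(x_k,\bar\tau_k,\bar g_k,H_k,\bar d_k)+\bar\alpha_k\bar\tau_kg_k^T(\bar d_k-d_k).$$
   Context: Problem: $\min_x f(x)$ s.t. $c(x)=0$, $f(x)=\mathbb{E}[F(x,\omega)]$, $c:\mathbb{R}^n\to\mathbb{R}^m$ deterministic. Notation: $g_k=\nabla f(x_k)$, $c_k=c(x_k)$, $J_k=\nabla c(x_k)^T$; $\phi(x,\tau)=\tau f(x)+\|c(x)\|_1$; $\Delta q(x,\tau,g,H,d)=-\tau(g^Td+\frac12\max\{d^THd,0\})+\|c(x)\|_1$. Standing Assumption: an open convex set $\mathcal X$ contains all iterates; $f$ is $C^1$, bounded below on $\mathcal X$, $\nabla f$ bounded and $L$-Lipschitz on $\mathcal X$; $c$, $\nabla c^T$ bounded on $\mathcal X$; $\nabla c_i$ is $\gamma_i$-Lipschitz on $\mathcal X$; singular values of $\nabla c(x)^T$ bounded away from zero uniformly over $\mathcal X$; $\Gamma:=\sum_i\gamma_i$. Matrix Assumption: deterministic symmetric $H_k$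 with $\|H_k\|_2\le\kappa_H$ and $u^TH_ku\ge\zeta\|u\|_2^2$ whenever $J_ku=0$. Algorithm 3 (inputs $x_0$, $\bar\tau_{-1}>0$, $\epsilon,\sigma\in(0,1)$, $\bar\xi_{-1}>0$, $\{\beta_k\}\subset(0,1]$, $\theta\ge0$): at iteration $k$, obtain stochastic gradient $\bar g_k$; $(\bar d_k,\bar y_k)$ solves $H_k\bar d_k+J_k^T\bar y_k=-\bar g_k$, $J_k\bar d_k=-c_k$ (assumed $\bar d_k\neq0$). $\bar\tau_k^{trial}=\infty$ if $\bar g_k^T\bar d_k+\max\{\bar d_k^TH_k\bar d_k,0\}\le0$, else $\frac{(1-\sigma)\|c_k\|_1}{\bar g_k^T\bar d_k+\max\{\bar d_k^TH_k\bar d_k,0\}}$; $\bar\tau_k=\bar\tau_{k-1}$ if $\bar\tau_{k-1}\le\bar\tau_k^{trial}$, else $(1-\epsilon)\bar\tau_k^{trial}$. $\bar\xi_k^{trial}=\frac{\Delta q(x_k,\bar\tau_k,\bar g_k,H_k,\bar d_k)}{\bar\tau_k\|\bar d_k\|_2^2}$; $\bar\xi_k=\bar\xi_{k-1}$ if $\bar\xi_{k-1}\le\bar\xi_k^{trial}$, else $(1-\epsilon)\bar\xi_k^{trial}$. With $D_k=(\bar\tau_kL+\Gamma)\|\bar d_k\|_2^2$, $\hat a_k=\beta_k\Delta q(x_k,\bar\tau_k,\bar g_k,H_k,\bar d_k)/D_k$, $\tilde a_k=\hat a_k-4\|c_k\|_1/D_k$, project both onto $[a_k,a_k+\theta\beta_k^2]$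 with $a_k=\frac{\beta_k\bar\xi_k\bar\tau_k}{\bar\tau_kL+\Gamma}$ to get $\widehat\alpha_k,\widetilde\alpha_k$; $\bar\alpha_k=\widehat\alpha_k$ if $\widehat\alpha_k<1$, $1$ if $\widetilde\alpha_k\le1\le\widehat\alpha_k$, $\widetilde\alpha_k$ if $\widetilde\alpha_k>1$; $x_{k+1}=x_k+\bar\alpha_k\bar d_k$. Deterministic counterpart: $(d_k,y_k)$ solves $H_kd_k+J_k^Ty_k=-g_k$, $J_kd_k=-c_k$. *)

theory Defs
  imports "HOL-Analysis.Analysis"
begin

definition norm1 :: "real^'m \<Rightarrow> real" where
  "norm1 v = (\<Sum>i\<in>UNIV. \<bar>v $ i\<bar>)"

definition merit :: "(real^'n \<Rightarrow> real) \<Rightarrow> (real^'n \<Rightarrow> real^'m) \<Rightarrow> real^'n \<Rightarrow> real \<Rightarrow> real" where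
  "merit f c x tau = tau * f x + norm1 (c x)"

definition Delta_q :: "(real^'n \<Rightarrow> real^'m) \<Rightarrow> real^'n \<Rightarrow> real \<Rightarrow> real^'n \<Rightarrow> real^'n^'n \<Rightarrow> real^'n \<Rightarrow> real" where
  "Delta_q c x tau g H d = - tau * (g \<bullet> d + 1/2 * max (d \<bullet> (H *v d)) 0) + norm1 (c x)"

definition proj_interval :: "real \<Rightarrow> real \<Rightarrow> real \<Rightarrow> real" where
  "proj_interval lo hi v = min hi (max lo v)"

end

theory Submission
  imports Defs
begin

text \<open>
  By the descent lemma, the step \<open>\<alpha> dbar\<close> changes \<open>\<tau> f\<close> by at most
  \<open>\<alpha> \<tau> g\<^sup>T dbar + \<tau> L/2 \<alpha>\<^sup>2 |dbar|\<^sup>2\<close>; applied to \<open>\<plusminus>c\<^sub>i\<close> and combined with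
  \<open>J dbar = -c\<close> it bounds \<open>|c(x + \<alpha> dbar)|\<^sub>1\<close> by \<open>|1 - \<alpha>| |c(x)|\<^sub>1 + \<Gamma>/2 \<alpha>\<^sup>2 |dbar|\<^sup>2\<close>.
  What remains is arithmetic on the step size: the update of \<open>xibar\<close> ensures
  \<open>a D \<le> \<beta> \<Delta>q\<close> for the lower end \<open>a\<close> of the projection interval, and in each of
  the three branches of the selection rule \<open>\<alpha>\<close> is then small enough that the
  quadratic term \<open>\<alpha>\<^sup>2 D/2\<close> and the constraint term are paid for by \<open>\<alpha> \<beta> \<Delta>q/2\<close>.
\<close>

lemma descent_lemma:
  fixes F :: "'a::real_inner \<Rightarrow> real" and G :: "'a \<Rightarrow> 'a"
  assumes "convex X" and x: "x \<in> X" and xh: "x + h \<in> X"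
    and deriv: "\<forall>z\<in>X. (F has_derivative (\<lambda>v. G z \<bullet> v)) (at z)"
    and lip: "\<forall>z\<in>X. norm (G z - G x) \<le> M * dist z x"
  shows "F (x + h) \<le> F x + G x \<bullet> h + M / 2 * (norm h)\<^sup>2"
proof -
  define \<psi> where "\<psi> t = F (x + t *\<^sub>R h) - t * (G x \<bullet> h) - M / 2 * t\<^sup>2 * (norm h)\<^sup>2" for t
  have "\<psi> 1 \<le> \<psi> 0"
  proof (rule DERIV_nonpos_imp_nonincreasing[of 0 1])
    fix t :: real assume t: "0 \<le> t" "t \<le> 1"
    let ?z = "x + t *\<^sub>R h"
    have "(1 - t) *\<^sub>R x + t *\<^sub>R (x + h) = ?z"
      by (simp add: algebra_simps)
    then have z: "?z \<in> X"
      using convexD[OF \<open>convex X\<close> x xh, of "1 - t" t] t by simp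
    have "((\<lambda>s. x + s *\<^sub>R h) has_derivative (\<lambda>s. s *\<^sub>R h)) (at t)"
      by (auto intro!: derivative_eq_intros)
    from has_derivative_compose[OF this deriv[rule_format, OF z]]
    have "((\<lambda>s. F (x + s *\<^sub>R h)) has_derivative (\<lambda>s. G ?z \<bullet> (s *\<^sub>R h))) (at t)"
      by (simp add: o_def)
    then have F': "((\<lambda>s. F (x + s *\<^sub>R h)) has_real_derivative G ?z \<bullet> h) (at t)"
      by (simp add: has_field_derivative_def mult.commute[of _ "G ?z \<bullet> h"])
    have \<psi>': "(\<psi> has_real_derivative G ?z \<bullet> h - G x \<bullet> h - M * t * (norm h)\<^sup>2) (at t)"
      unfolding \<psi>_def by (rule derivative_eq_intros F' refl | simp)+
    have "G ?z \<bullet> h - G x \<bullet> h \<le> norm (G ?z - G x) * norm h"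
      by (metis inner_diff_left norm_cauchy_schwarz)
    also have "\<dots> \<le> M * dist ?z x * norm h"
      using lip z by (intro mult_right_mono) auto
    also have "\<dots> = M * t * (norm h)\<^sup>2"
      using t by (simp add: dist_norm power2_eq_square)
    finally have "G ?z \<bullet> h - G x \<bullet> h - M * t * (norm h)\<^sup>2 \<le> 0"
      by simp
    with \<psi>' show "\<exists>y. (\<psi> has_real_derivative y) (at t) \<and> y \<le> 0"
      by blast
  qed simp
  then show ?thesis
    unfolding \<psi>_def by simp
qed

lemma linearization_error_le:
  fixes F :: "'a::real_inner \<Rightarrow> real" and G :: "'a \<Rightarrow> 'a"
  assumes "convex X" "x \<in> X" "x + h \<in> X"
    and deriv: "\<forall>z\<in>X. (F has_derivative (\<lambda>v. G z \<bullet> v)) (at z)"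
    and lip: "\<forall>z\<in>X. norm (G z - G x) \<le> M * dist z x"
  shows "\<bar>F (x + h) - F x - G x \<bullet> h\<bar> \<le> M / 2 * (norm h)\<^sup>2"
proof -
  have "\<forall>z\<in>X. ((\<lambda>w. - F w) has_derivative (\<lambda>v. - G z \<bullet> v)) (at z)"
    using deriv by (auto dest: has_derivative_minus)
  moreover have "\<forall>z\<in>X. norm (- G z - - G x) \<le> M * dist z x"
    using lip by (simp add: norm_minus_commute)
  ultimately have "- F (x + h) \<le> - F x + (- G x) \<bullet> h + M / 2 * (norm h)\<^sup>2"
    by (rule descent_lemma[OF assms(1-3)])
  then show ?thesis
    using descent_lemma[OF assms] unfolding abs_le_iff inner_minus_left by linarith
qed

lemma lipschitz_constant_nonneg:
  fixes F :: "'a::{real_normed_vector, perfect_space} \<Rightarrow> 'b::real_normed_vector"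
  assumes "open X" "X \<noteq> {}" and lip: "\<forall>y\<in>X. \<forall>z\<in>X. norm (F y - F z) \<le> M * dist y z"
  shows "M \<ge> 0"
proof -
  obtain x e where "x \<in> X" "e > 0" "ball x e \<subseteq> X"
    using assms(1,2) open_contains_ball by blast
  moreover obtain z where z: "dist x z = e / 2"
    using vector_choose_dist[of "e / 2" x] \<open>e > 0\<close> by auto
  ultimately have "z \<in> X"
    by auto
  with lip \<open>x \<in> X\<close> have "0 \<le> M * dist x z"
    using norm_ge_zero order_trans by blast
  moreover have "0 < dist x z"
    using z \<open>e > 0\<close> by linarith
  ultimately show ?thesis
    by (simp add: zero_le_mult_iff)
qed

lemma norm1_nonneg: "norm1 v \<ge> 0"
  unfolding norm1_def by (simp add: sum_nonneg)

lemma norm1_step_le: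
  fixes c :: "real^'n \<Rightarrow> real^'m" and Jc :: "real^'n \<Rightarrow> real^'n^'m"
  assumes "convex X" "x \<in> X" "x + \<alpha> *\<^sub>R d \<in> X"
    and deriv: "\<forall>z\<in>X. (c has_derivative (\<lambda>v. Jc z *v v)) (at z)"
    and lip: "\<forall>i. \<forall>z\<in>X. norm (Jc z $ i - Jc x $ i) \<le> \<gamma> i * dist z x"
    and lin: "Jc x *v d = - c x"
  shows "norm1 (c (x + \<alpha> *\<^sub>R d)) \<le> \<bar>1 - \<alpha>\<bar> * norm1 (c x) + sum \<gamma> UNIV / 2 * (\<alpha>\<^sup>2 * (norm d)\<^sup>2)"
proof -
  have "\<bar>c (x + \<alpha> *\<^sub>R d) $ i\<bar> \<le> \<bar>1 - \<alpha>\<bar> * \<bar>c x $ i\<bar> + \<gamma> i / 2 * (\<alpha>\<^sup>2 * (norm d)\<^sup>2)" for i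
  proof -
    have "\<forall>z\<in>X. ((\<lambda>w. c w $ i) has_derivative (\<lambda>v. Jc z $ i \<bullet> v)) (at z)"
    proof
      fix z assume "z \<in> X"
      have "((\<lambda>v. v $ i) has_derivative (\<lambda>v. v $ i)) (at (c z))"
        by (rule bounded_linear_imp_has_derivative) (rule bounded_linear_vec_nth)
      from has_derivative_compose[OF deriv[rule_format, OF \<open>z \<in> X\<close>] this]
      show "((\<lambda>w. c w $ i) has_derivative (\<lambda>v. Jc z $ i \<bullet> v)) (at z)"
        by (simp add: o_def matrix_vector_mul_component)
    qed
    from linearization_error_le[OF assms(1-3) this spec[OF lip, of i]]
    have "\<bar>c (x + \<alpha> *\<^sub>R d) $ i - c x $ i - Jc x $ i \<bullet> (\<alpha> *\<^sub>R d)\<bar> \<le> \<gamma> i / 2 * (\<alpha>\<^sup>2 * (norm d)\<^sup>2)"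
      by (simp add: power_mult_distrib)
    moreover have "Jc x $ i \<bullet> (\<alpha> *\<^sub>R d) = - \<alpha> * c x $ i"
      using lin by (simp add: matrix_vector_mul_component[symmetric])
    ultimately have "\<bar>c (x + \<alpha> *\<^sub>R d) $ i - (1 - \<alpha>) * c x $ i\<bar> \<le> \<gamma> i / 2 * (\<alpha>\<^sup>2 * (norm d)\<^sup>2)"
      by (simp add: algebra_simps)
    moreover have "\<bar>c (x + \<alpha> *\<^sub>R d) $ i\<bar> \<le> \<bar>c (x + \<alpha> *\<^sub>R d) $ i - (1 - \<alpha>) * c x $ i\<bar> + \<bar>(1 - \<alpha>) * c x $ i\<bar>"
      using abs_triangle_ineq[of "c (x + \<alpha> *\<^sub>R d) $ i - (1 - \<alpha>) * c x $ i" "(1 - \<alpha>) * c x $ i"]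
      by simp
    ultimately show ?thesis
      by (simp add: abs_mult)
  qed
  then have "norm1 (c (x + \<alpha> *\<^sub>R d)) \<le> (\<Sum>i\<in>UNIV. \<bar>1 - \<alpha>\<bar> * \<bar>c x $ i\<bar> + \<gamma> i / 2 * (\<alpha>\<^sup>2 * (norm d)\<^sup>2))"
    unfolding norm1_def by (rule sum_mono)
  then show ?thesis
    by (simp add: norm1_def sum.distrib sum_distrib_left sum_distrib_right sum_divide_distrib)
qed

lemma merit_step_le:
  fixes f :: "real^'n \<Rightarrow> real" and gf :: "real^'n \<Rightarrow> real^'n"
    and c :: "real^'n \<Rightarrow> real^'m" and Jc :: "real^'n \<Rightarrow> real^'n^'m"
  assumes "convex X" "x \<in> X" "x + \<alpha> *\<^sub>R d \<in> X" "\<tau> \<ge> 0"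
    and f_deriv: "\<forall>z\<in>X. (f has_derivative (\<lambda>h. gf z \<bullet> h)) (at z)"
    and gf_lip: "\<forall>y\<in>X. \<forall>z\<in>X. norm (gf y - gf z) \<le> L * dist y z"
    and c_deriv: "\<forall>z\<in>X. (c has_derivative (\<lambda>h. Jc z *v h)) (at z)"
    and Jc_row_lip: "\<forall>i. \<forall>y\<in>X. \<forall>z\<in>X. norm (Jc y $ i - Jc z $ i) \<le> \<gamma> i * dist y z"
    and lin: "Jc x *v d = - c x"
  shows "merit f c (x + \<alpha> *\<^sub>R d) \<tau> - merit f c x \<tau>
           \<le> \<alpha> * \<tau> * (gf x \<bullet> d) + \<bar>1 - \<alpha>\<bar> * norm1 (c x) - norm1 (c x)
             + \<alpha>\<^sup>2 / 2 * ((\<tau> * L + sum \<gamma> UNIV) * (norm d)\<^sup>2)"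
proof -
  have gf_lip_x: "\<forall>z\<in>X. norm (gf z - gf x) \<le> L * dist z x"
    and Jc_row_lip_x: "\<forall>i. \<forall>z\<in>X. norm (Jc z $ i - Jc x $ i) \<le> \<gamma> i * dist z x"
    using gf_lip Jc_row_lip \<open>x \<in> X\<close> by blast+
  from descent_lemma[OF assms(1-3) f_deriv gf_lip_x]
  have "f (x + \<alpha> *\<^sub>R d) \<le> f x + \<alpha> * (gf x \<bullet> d) + L / 2 * (\<alpha>\<^sup>2 * (norm d)\<^sup>2)"
    by (simp add: power_mult_distrib)
  then have "\<tau> * f (x + \<alpha> *\<^sub>R d) \<le> \<tau> * (f x + \<alpha> * (gf x \<bullet> d) + L / 2 * (\<alpha>\<^sup>2 * (norm d)\<^sup>2))"
    using \<open>\<tau> \<ge> 0\<close> by (rule mult_left_mono)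
  moreover note norm1_step_le[OF assms(1-3) c_deriv Jc_row_lip_x lin]
  ultimately show ?thesis
    unfolding merit_def by (simp add: algebra_simps)
qed

lemma neg_Delta_q_lower_bound:
  assumes "0 \<le> \<alpha>" "0 \<le> \<tau>"
  shows "\<alpha> * \<tau> * (g \<bullet> dbar) - \<alpha> * norm1 (c x)
           \<le> - \<alpha> * Delta_q c x \<tau> g H d + \<alpha> * \<tau> * (g \<bullet> (dbar - d))"
proof -
  have "0 \<le> \<alpha> * \<tau> * max (d \<bullet> (H *v d)) 0"
    using assms by simp
  then show ?thesis
    unfolding Delta_q_def inner_diff_right by (simp add: algebra_simps)
qed

lemma merit_parameter_nonneg:
  fixes \<tau> den N :: "nat \<Rightarrow> real"
  assumes upd: "\<forall>k. let \<tau>prev = (if k = 0 then \<tau>_init else \<tau> (k - 1));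
                     trial = (1 - \<sigma>) * N k / den k
                 in \<tau> k = (if den k \<le> 0 \<or> \<tau>prev \<le> trial then \<tau>prev else (1 - \<epsilon>) * trial)"
    and "\<tau>_init \<ge> 0" "\<epsilon> < 1" "\<sigma> < 1" "\<forall>k. N k \<ge> 0"
  shows "\<tau> k \<ge> 0"
proof (induction k)
  case 0
  then show ?case
    using upd[rule_format, of 0] assms(2-5) by (auto simp: Let_def)
next
  case (Suc k)
  then show ?case
    using upd[rule_format, of "Suc k"] assms(3-5) by (auto simp: Let_def)
qed

lemma step_size_selection_bound:
  fixes D N a hi bQ \<alpha> :: real
  assumes D: "D > 0" and N: "N \<ge> 0" and a: "0 < a" "a \<le> 1" "a \<le> hi"
    and aD: "a * D \<le> bQ"
    and \<alpha>: "\<alpha> = (let \<alpha>h = proj_interval a hi (bQ / D);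
                     \<alpha>t = proj_interval a hi (bQ / D - 4 * N / D)
                 in if \<alpha>h < 1 then \<alpha>h else if \<alpha>t \<le> 1 then 1 else \<alpha>t)"
  shows "0 < \<alpha>" and "\<alpha>\<^sup>2 / 2 * D + \<bar>1 - \<alpha>\<bar> * N - N + \<alpha> * N \<le> \<alpha> / 2 * bQ"
proof -
  define \<alpha>h where "\<alpha>h = proj_interval a hi (bQ / D)"
  define \<alpha>t where "\<alpha>t = proj_interval a hi (bQ / D - 4 * N / D)"
  have "a \<le> bQ / D"
    using aD D by (simp add: field_simps)
  then have \<alpha>h_bounds: "a \<le> \<alpha>h" "\<alpha>h \<le> bQ / D"
    using a by (auto simp: \<alpha>h_def proj_interval_def)
  have \<alpha>t_bounds: "a \<le> \<alpha>t" "1 < \<alpha>t \<Longrightarrow> \<alpha>t \<le> bQ / D - 4 * N / D"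
    using a by (auto simp: \<alpha>t_def proj_interval_def)
  consider "\<alpha> = \<alpha>h" "\<alpha>h < 1" | "\<alpha> = 1" "1 \<le> \<alpha>h" | "\<alpha> = \<alpha>t" "1 < \<alpha>t"
    using \<alpha> unfolding \<alpha>h_def \<alpha>t_def Let_def by (auto split: if_splits)
  then have "0 < \<alpha> \<and> \<alpha>\<^sup>2 / 2 * D + \<bar>1 - \<alpha>\<bar> * N - N + \<alpha> * N \<le> \<alpha> / 2 * bQ"
  proof cases
    case 1
    then have "\<alpha> * D \<le> bQ" "0 < \<alpha>" "\<alpha> < 1"
      using \<alpha>h_bounds a D by (auto simp: field_simps)
    then have "\<alpha> * (\<alpha> * D) \<le> \<alpha> * bQ"
      by (simp add: mult_left_mono)
    then show ?thesis
      using \<open>0 < \<alpha>\<close> \<open>\<alpha> < 1\<close> by (simp add: power2_eq_square algebra_simps)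
  next
    case 2
    then have "D \<le> \<alpha>h * D"
      using D by simp
    also have "\<dots> \<le> bQ"
      using \<alpha>h_bounds D by (simp add: field_simps)
    finally have "D \<le> bQ" .
    then show ?thesis
      using 2 by simp
  next
    case 3
    \<comment> \<open>here \<open>\<alpha> > 1\<close>, and the extra \<open>4 N / D\<close> in \<open>\<alpha>t\<close> absorbs the constraint term \<open>2 (\<alpha> - 1) N\<close>\<close>
    then have "\<alpha> * D \<le> bQ - 4 * N"
      using \<alpha>t_bounds D by (simp add: field_simps)
    then have "\<alpha> * (\<alpha> * D) \<le> \<alpha> * (bQ - 4 * N)"
      using 3 by (intro mult_left_mono) auto
    then show ?thesis
      using 3 N by (simp add: power2_eq_square algebra_simps)
  qed
  then show "0 < \<alpha>" and "\<alpha>\<^sup>2 / 2 * D + \<bar>1 - \<alpha>\<bar> * N - N + \<alpha> * N \<le> \<alpha> / 2 * bQ"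
    by simp_all
qed

lemma step_size_rule_bound:
  fixes \<tau> \<xi> \<xi>prev \<beta> S nd N Qb \<theta> \<epsilon> \<alpha> :: real
  assumes "0 \<le> \<tau>" "0 \<le> S" "0 < \<beta>" "0 < nd" "0 \<le> N" "0 \<le> \<theta>" "0 < \<epsilon>" "\<epsilon> < 1"
    and a: "0 < \<beta> * \<xi> * \<tau> / S" "\<beta> * \<xi> * \<tau> / S \<le> 1"
    and \<xi>: "\<xi> = (let trial = Qb / (\<tau> * nd) in if \<xi>prev \<le> trial then \<xi>prev else (1 - \<epsilon>) * trial)"
    and \<alpha>: "\<alpha> = (let D = S * nd;
                     a_hat = \<beta> * Qb / D;
                     a_til = a_hat - 4 * N / D;
                     a = \<beta> * \<xi> * \<tau> / S;
                     \<alpha>h = proj_interval a (a + \<theta> * \<beta>\<^sup>2) a_hat;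
                     \<alpha>t = proj_interval a (a + \<theta> * \<beta>\<^sup>2) a_til
                 in if \<alpha>h < 1 then \<alpha>h else if \<alpha>t \<le> 1 then 1 else \<alpha>t)"
  shows "0 < \<tau>" and "0 < \<alpha>"
    and "\<alpha>\<^sup>2 / 2 * (S * nd) + \<bar>1 - \<alpha>\<bar> * N - N + \<alpha> * N \<le> 1/2 * \<alpha> * \<beta> * Qb"
proof -
  have "0 < S" "0 < \<beta> * \<xi> * \<tau>"
    using a(1) \<open>0 \<le> S\<close> by (auto simp: zero_less_divide_iff)
  then show "0 < \<tau>"
    using \<open>0 \<le> \<tau>\<close> \<open>0 < \<beta>\<close> by (auto simp: zero_less_mult_iff)
  have "0 < \<xi>"
    using \<open>0 < \<beta> * \<xi> * \<tau>\<close> \<open>0 \<le> \<tau>\<close> \<open>0 < \<beta>\<close> by (auto simp: zero_less_mult_iff)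
  have "\<xi> \<le> Qb / (\<tau> * nd)"
  proof (cases "\<xi>prev \<le> Qb / (\<tau> * nd)")
    case True
    with \<xi> show ?thesis
      by (simp add: Let_def)
  next
    case False
    with \<xi> have \<xi>_eq: "\<xi> = (1 - \<epsilon>) * (Qb / (\<tau> * nd))"
      by (simp add: Let_def)
    with \<open>0 < \<xi>\<close> \<open>\<epsilon> < 1\<close> have "0 < Qb / (\<tau> * nd)"
      by (metis diff_gt_0_iff_gt zero_less_mult_pos)
    with \<open>0 < \<epsilon>\<close> have "0 < \<epsilon> * (Qb / (\<tau> * nd))"
      by (rule mult_pos_pos)
    with \<xi>_eq show ?thesis
      unfolding left_diff_distrib mult_1 by linarith
  qed
  then have "\<xi> * \<tau> * nd \<le> Qb"
    using \<open>0 < \<tau>\<close> \<open>0 < nd\<close> by (simp add: field_simps)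
  then have "\<beta> * \<xi> * \<tau> / S * (S * nd) \<le> \<beta> * Qb"
    using \<open>0 < S\<close> \<open>0 < \<beta>\<close> by simp
  from step_size_selection_bound[OF _ \<open>0 \<le> N\<close> a _ this, of "\<beta> * \<xi> * \<tau> / S + \<theta> * \<beta>\<^sup>2" \<alpha>]
  show "0 < \<alpha>" and "\<alpha>\<^sup>2 / 2 * (S * nd) + \<bar>1 - \<alpha>\<bar> * N - N + \<alpha> * N \<le> 1/2 * \<alpha> * \<beta> * Qb"
    using \<alpha> \<open>0 < S\<close> \<open>0 < nd\<close> \<open>0 \<le> \<theta>\<close> by (simp_all add: Let_def)
qed

theorem lemma3p6:
  fixes f :: "real^'n \<Rightarrow> real" and gf :: "real^'n \<Rightarrow> real^'n"
    and c :: "real^'n \<Rightarrow> real^'m" and Jc :: "real^'n \<Rightarrow> real^'n^'m"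
    and X :: "(real^'n) set"
    and L :: real and \<gamma> :: "'m \<Rightarrow> real"
    and H :: "nat \<Rightarrow> real^'n^'n" and \<kappa>H \<zeta> :: real
    and xs :: "nat \<Rightarrow> real^'n"
    and gbar dbar d :: "nat \<Rightarrow> real^'n" and ybar y :: "nat \<Rightarrow> real^'m"
    and taubar xibar alphabar beta :: "nat \<Rightarrow> real"
    and tau_init xi_init \<epsilon> \<sigma> \<theta> :: real
  assumes
    \<comment> \<open>Standing Assumption\<close>
    X_open: "open X" and X_convex: "convex X" and iterates_in_X: "\<forall>k. xs k \<in> X"
    and f_deriv: "\<forall>x\<in>X. (f has_derivative (\<lambda>h. gf x \<bullet> h)) (at x)"
    and gf_cont: "continuous_on X gf"
    and f_bdd_below: "\<exists>fl. \<forall>x\<in>X. fl \<le> f x"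
    and gf_bdd: "\<exists>B. \<forall>x\<in>X. norm (gf x) \<le> B"
    and gf_lip: "\<forall>x\<in>X. \<forall>z\<in>X. norm (gf x - gf z) \<le> L * dist x z"
    and c_deriv: "\<forall>x\<in>X. (c has_derivative (\<lambda>h. Jc x *v h)) (at x)"
    and c_bdd: "\<exists>B. \<forall>x\<in>X. norm (c x) \<le> B"
    and Jc_bdd: "\<exists>B. \<forall>x\<in>X. norm (Jc x) \<le> B"
    and Jc_row_lip: "\<forall>i. \<forall>x\<in>X. \<forall>z\<in>X. norm (Jc x $ i - Jc z $ i) \<le> \<gamma> i * dist x z"
    and Jc_sv: "\<exists>s>0. \<forall>x\<in>X. \<forall>v. s * norm v \<le> norm (transpose (Jc x) *v v)"
    \<comment> \<open>Matrix Assumption\<close>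
    and H_sym: "\<forall>k. transpose (H k) = H k"
    and H_bdd: "\<forall>k. \<forall>u. norm (H k *v u) \<le> \<kappa>H * norm u"
    and \<zeta>_pos: "\<zeta> > 0"
    and H_curv: "\<forall>k. \<forall>u. Jc (xs k) *v u = 0 \<longrightarrow> \<zeta> * (norm u)\<^sup>2 \<le> u \<bullet> (H k *v u)"
    \<comment> \<open>Algorithm 3 inputs\<close>
    and tau_init_pos: "tau_init > 0" and xi_init_pos: "xi_init > 0"
    and \<epsilon>_range: "0 < \<epsilon> \<and> \<epsilon> < 1" and \<sigma>_range: "0 < \<sigma> \<and> \<sigma> < 1"
    and beta_range: "\<forall>k. 0 < beta k \<and> beta k \<le> 1"
    and \<theta>_nonneg: "\<theta> \<ge> 0"
    \<comment> \<open>stochastic search direction and its deterministic counterpart\<close>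
    and dbar_sys: "\<forall>k. H k *v dbar k + transpose (Jc (xs k)) *v ybar k = - gbar k
                       \<and> Jc (xs k) *v dbar k = - c (xs k)"
    and dbar_nz: "\<forall>k. dbar k \<noteq> 0"
    and d_sys: "\<forall>k. H k *v d k + transpose (Jc (xs k)) *v y k = - gf (xs k)
                       \<and> Jc (xs k) *v d k = - c (xs k)"
    \<comment> \<open>merit parameter update\<close>
    and tau_upd: "\<forall>k. let tprev = (if k = 0 then tau_init else taubar (k - 1));
                         den = gbar k \<bullet> dbar k + max (dbar k \<bullet> (H k *v dbar k)) 0;
                         trial = (1 - \<sigma>) * norm1 (c (xs k)) / den
                     in taubar k = (if den \<le> 0 \<or> tprev \<le> trial then tprev else (1 - \<epsilon>) * trial)"
    \<comment> \<open>ratio parameter update\<close>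
    and xi_upd: "\<forall>k. let xprev = (if k = 0 then xi_init else xibar (k - 1));
                        trial = Delta_q c (xs k) (taubar k) (gbar k) (H k) (dbar k)
                                / (taubar k * (norm (dbar k))\<^sup>2)
                    in xibar k = (if xprev \<le> trial then xprev else (1 - \<epsilon>) * trial)"
    \<comment> \<open>step size selection\<close>
    and alpha_sel: "\<forall>k. let D = (taubar k * L + sum \<gamma> UNIV) * (norm (dbar k))\<^sup>2;
                           a_hat = beta k * Delta_q c (xs k) (taubar k) (gbar k) (H k) (dbar k) / D;
                           a_til = a_hat - 4 * norm1 (c (xs k)) / D;
                           a = beta k * xibar k * taubar k / (taubar k * L + sum \<gamma> UNIV);
                           \<alpha>h = proj_interval a (a + \<theta> * (beta k)\<^sup>2) a_hat;
                           \<alpha>t = proj_interval a (a + \<theta> * (beta k)\<^sup>2) a_til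
                       in alphabar k = (if \<alpha>h < 1 then \<alpha>h else if \<alpha>t \<le> 1 then 1 else \<alpha>t)"
    and x_upd: "\<forall>k. xs (Suc k) = xs k + alphabar k *\<^sub>R dbar k"
    \<comment> \<open>hypothesis of the lemma on the choice of beta\<close>
    and beta_choice: "\<forall>k. 0 < beta k * xibar k * taubar k / (taubar k * L + sum \<gamma> UNIV)
                          \<and> beta k * xibar k * taubar k / (taubar k * L + sum \<gamma> UNIV) \<le> 1"
  shows "\<forall>k. merit f c (xs k + alphabar k *\<^sub>R dbar k) (taubar k) - merit f c (xs k) (taubar k)
             \<le> - alphabar k * Delta_q c (xs k) (taubar k) (gf (xs k)) (H k) (d k)
               + 1/2 * alphabar k * beta k * Delta_q c (xs k) (taubar k) (gbar k) (H k) (dbar k)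
               + alphabar k * taubar k * (gf (xs k) \<bullet> (dbar k - d k))"
proof -
  have tau_nonneg: "taubar k \<ge> 0" for k
    using tau_upd[unfolded Let_def]
    by (rule merit_parameter_nonneg[where \<tau>_init = tau_init and N = "\<lambda>k. norm1 (c (xs k))"
          and den = "\<lambda>k. gbar k \<bullet> dbar k + max (dbar k \<bullet> (H k *v dbar k)) 0", unfolded Let_def])
      (use tau_init_pos \<epsilon>_range \<sigma>_range norm1_nonneg in auto)
  have "X \<noteq> {}"
    using iterates_in_X by blast
  with lipschitz_constant_nonneg[OF X_open _ gf_lip] lipschitz_constant_nonneg[OF X_open _ spec[OF Jc_row_lip]]
  have S_nonneg: "taubar k * L + sum \<gamma> UNIV \<ge> 0" for k
    using tau_nonneg[of k] by (simp add: sum_nonneg)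
  show ?thesis (is "\<forall>k. ?descent k")
  proof
    fix k
    have "0 < beta k" "0 < (norm (dbar k))\<^sup>2"
      using beta_range dbar_nz by auto
    note step = step_size_rule_bound[unfolded Let_def, OF tau_nonneg S_nonneg this norm1_nonneg \<theta>_nonneg
        \<epsilon>_range[THEN conjunct1] \<epsilon>_range[THEN conjunct2] beta_choice[rule_format, THEN conjunct1, of k]
        beta_choice[rule_format, THEN conjunct2, of k] xi_upd[rule_format, of k, unfolded Let_def]
        alpha_sel[rule_format, of k, unfolded Let_def]]
    have "xs k \<in> X" "xs k + alphabar k *\<^sub>R dbar k \<in> X"
      using iterates_in_X x_upd by metis+
    note merit_step_le[OF X_convex this tau_nonneg[of k] f_deriv gf_lip c_deriv Jc_row_lip
        dbar_sys[rule_format, THEN conjunct2]]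
      neg_Delta_q_lower_bound[of "alphabar k" "taubar k" "gf (xs k)" "dbar k" c "xs k" "H k" "d k",
        OF less_imp_le[OF step(2)] tau_nonneg]
    then show "?descent k"
      using step(3) by linarith
  qed
qed

end
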